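(* Let $\mathbf X=(X_1,\dots,X_k)$, $2\le k\le n$, be homogeneous coordinates of proper cycles and $S$ a vector with $(S\mid S)\le0$ such that $X_1,\dots,X_k,S$ are linearly independent and $\Delta(\mathbf X,S)<0$. (1) If $(S\mid S)<0$: every nonproper cycle $x\in\langle\mathbf x,s\rangle$ with $x\neq s$ has exactly two projections onto $\Omega$ along $s$; every cycle $x\in\langle\mathbf x,s\rangle\cap\langle s\rangle^\perp$ satisfies $(X\mid X)>0$ (in particular is nonproper); and $\langle\mathbf X,S\rangle=(\langle\mathbf X,S\rangle\cap\langle S\rangle^\perp)\oplus\langle S\rangle$. (2) If $(S\mid S)=0$: every cycle $x\in\langle\mathbf x,s\rangle\cap\langle s\rangle^\perp$ with $x\neq s$ satisfies $(X\mid X)>0$ and has no projection onto $\Omega$ along $s$ other than $s$; and for any proper cycle $y\in\langle\mathbf x,s\rangle$ with $y\notin\langle s\rangle^\perp$, $\langle\mathbf X,S\rangle=(\langle\mathbf X,S\rangle\cap\langle S\rangle^\perp)\oplus\langle Y\rangle$.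
   Context: Let $n\ge 2$. For $X=(\xi_0,\boldsymbol\xi_1,\xi_2,\xi_3)$ and $Y=(\eta_0,\boldsymbol\eta_1,\eta_2,\eta_3)$ in $\mathbb{R}^{n+3}=\mathbb{R}\times\mathbb{R}^n\times\mathbb{R}\times\mathbb{R}$, the Lie product is the nondegenerate symmetric bilinear form $(X\mid Y)=\xi_0\eta_2+\boldsymbol\xi_1\cdot\boldsymbol\eta_1+\xi_2\eta_0-\xi_3\eta_3$ (signature $(n+1,2)$). Points of $\mathbb{P}^{n+2}$ are called cycles; a lowercase letter denotes a cycle and the uppercase letter a homogeneous coordinate vector of it. The Lie quadric is $\Omega=\{x:(X\mid X)=0\}$; cycles in $\Omega$ are proper, the others nonproper. For a list $\mathbf X$, $\langle\mathbf X\rangle$ is its span, $\langle\mathbf X\rangle^\perp=\{Y:(X_i\mid Y)=0\ \forall i\}$, $\langle\mathbf x\rangle,\langle\mathbf x\rangle^\perp$ the corresponding projective subspaces, and $\Delta(\mathbf X)=\det[(X_i\mid X_j)]$ the Gram determinant. The set $\langle\mathbf x,s\rangle\cap\Omega$ is an $s$-family, called hyperbolic when $\Delta(\mathbf X,S)<0$. A projection of $x$ onto $\Omega$ along $s$ is a point of $\langle x,s\rangle\cap\Omega$. *)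

theory Defs
  imports "HOL-Analysis.Analysis"
begin

text \<open>Vectors of R^(n+3) = R x R^n x R x R; the index type 'n has CARD('n) = n.\<close>
type_synonym 'n lievec = "real \<times> (real^'n) \<times> real \<times> real"

definition lie_prod :: "'n::finite lievec \<Rightarrow> 'n lievec \<Rightarrow> real" where
  "lie_prod X Y = (case X of (x0, x1, x2, x3) \<Rightarrow> case Y of (y0, y1, y2, y3) \<Rightarrow>
      x0 * y2 + x1 \<bullet> y1 + x2 * y0 - x3 * y3)"

definition gram_det :: "'n::finite lievec list \<Rightarrow> real" where
  "gram_det Xs = (\<Sum>p\<in>{p. p permutes {..<length Xs}}.
       of_int (sign p) * (\<Prod>i<length Xs. lie_prod (Xs ! i) (Xs ! (p i))))"

text \<open>The cycle (projective point) with homogeneous coordinate vector X \<noteq> 0 is the line span {X}.\<close>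
definition cycle :: "'n::finite lievec \<Rightarrow> 'n lievec set" where
  "cycle X = span {X}"

definition lie_perp :: "'n::finite lievec set \<Rightarrow> 'n lievec set" where
  "lie_perp A = {Y. \<forall>X\<in>A. lie_prod X Y = 0}"

text \<open>The set of projections of the cycle x onto the Lie quadric along s:
  the points of <x,s> \<inter> Omega.\<close>
definition projections :: "'n::finite lievec \<Rightarrow> 'n lievec \<Rightarrow> 'n lievec set set" where
  "projections X S = {cycle P | P. P \<noteq> 0 \<and> P \<in> span {X, S} \<and> lie_prod P P = 0}"

definition direct_sum_eq :: "'n::finite lievec set \<Rightarrow> 'n lievec set \<Rightarrow> 'n lievec set \<Rightarrow> bool" where
  "direct_sum_eq V U W \<longleftrightarrow> V = {u + w | u w. u \<in> U \<and> w \<in> W} \<and> U \<inter> W = {0}"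

end

theory Submission
  imports Defs "Jordan_Normal_Form.Determinant"
begin

text \<open>Diagonalising the Lie product on V = <X, S> by an orthogonal basis writes the Gram
  determinant as a square times the product of the norms of the basis vectors. The ambient
  form has index 2: a negative definite subspace meets the codimension-2 subspace
  {xi0 = xi2, xi3 = 0}, on which the form is nonnegative, only in 0. Hence at most two of
  the norms are negative, and Delta(X, S) < 0 forces exactly one: the restriction to V is
  Lorentzian. In a Lorentzian space two orthogonal non-spacelike vectors are proportional, so
  every vector of V orthogonal to S and not a multiple of it is spacelike. The plane <x, s>
  therefore contains two null lines when S is timelike, and only <s> when S is null.
  Only independence, Delta(X, S) < 0 and (S | S) <= 0 are used.\<close>

lemma lie_prod_components:
  "lie_prod X Y = fst X * fst (snd (snd Y)) + fst (snd X) \<bullet> fst (snd Y)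
     + fst (snd (snd X)) * fst Y - snd (snd (snd X)) * snd (snd (snd Y))"
  by (cases X; cases Y) (auto simp: lie_prod_def)

lemma lie_prod_commute: "lie_prod X Y = lie_prod Y X"
  by (simp add: lie_prod_components inner_commute algebra_simps)

lemma bilinear_lie_prod: "bilinear lie_prod"
  unfolding bilinear_def
  by (auto intro!: linearI simp: lie_prod_components inner_add_left inner_add_right algebra_simps)

lemmas lie_prod_add_left = bilinear_ladd[OF bilinear_lie_prod]
lemmas lie_prod_add_right = bilinear_radd[OF bilinear_lie_prod]
lemmas lie_prod_diff_left = bilinear_lsub[OF bilinear_lie_prod]
lemmas lie_prod_diff_right = bilinear_rsub[OF bilinear_lie_prod]
lemmas lie_prod_scaleR_left = bilinear_lmul[OF bilinear_lie_prod, unfolded real_scaleR_def]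
lemmas lie_prod_scaleR_right = bilinear_rmul[OF bilinear_lie_prod, unfolded real_scaleR_def]
lemmas lie_prod_zero_left[simp] = bilinear_lzero[OF bilinear_lie_prod]
lemmas lie_prod_zero_right[simp] = bilinear_rzero[OF bilinear_lie_prod]

lemmas lie_prod_simps = lie_prod_add_left lie_prod_add_right lie_prod_diff_left
  lie_prod_diff_right lie_prod_scaleR_left lie_prod_scaleR_right

lemma lie_perp_singleton_iff [simp]: "Y \<in> lie_perp {S} \<longleftrightarrow> lie_prod S Y = 0"
  by (simp add: lie_perp_def)

definition lie_orthogonal :: "'n::finite lievec set \<Rightarrow> bool" where
  "lie_orthogonal Y \<longleftrightarrow> (\<forall>a\<in>Y. \<forall>b\<in>Y. a \<noteq> b \<longrightarrow> lie_prod a b = 0)"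

lemma lie_prod_self_add:
  "lie_prod (a + b) (a + b) = lie_prod a a + 2 * lie_prod a b + lie_prod b b"
  by (simp add: lie_prod_simps lie_prod_commute[of b a])

lemma lie_orthogonal_basis_exists:
  fixes U :: "'n::finite lievec set"
  assumes "subspace U"
  shows "\<exists>Y. independent Y \<and> span Y = U \<and> lie_orthogonal Y"
  using assms
proof (induction "dim U" arbitrary: U rule: less_induct)
  case less
  show ?case
  proof (cases "\<forall>u\<in>U. lie_prod u u = 0")
    case True
    obtain B where B: "B \<subseteq> U" "independent B" "U \<subseteq> span B"
      by (rule basis_exists)
    have "lie_prod a b = 0" if "a \<in> U" "b \<in> U" for a b
    proof -
      have "a + b \<in> U" using that less.prems subspace_add by blast
      then show ?thesis using True that lie_prod_self_add[of a b] by simp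
    qed
    moreover have "span B = U"
      using B less.prems span_subspace by blast
    ultimately show ?thesis
      using B unfolding lie_orthogonal_def by blast
  next
    case False
    then obtain u where u: "u \<in> U" "lie_prod u u \<noteq> 0" by blast
    define U' where "U' = {v\<in>U. lie_prod u v = 0}"
    have U': "subspace U'"
      using less.prems unfolding U'_def subspace_def by (auto simp: lie_prod_simps)
    have "U' \<subset> U" using u unfolding U'_def by auto
    then have "dim U' < dim U"
      using dim_psubset U' less.prems span_eq_iff by metis
    then obtain Y' where Y': "independent Y'" "span Y' = U'" "lie_orthogonal Y'"
      using less.hyps U' by blast
    have Y'U': "Y' \<subseteq> U'" using Y'(2) span_superset by blast
    have "u \<notin> span Y'" using Y'(2) u unfolding U'_def by auto
    then have "independent (insert u Y')"
      using Y'(1) independent_insert by metis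
    moreover have "span (insert u Y') = U"
    proof
      show "span (insert u Y') \<subseteq> U"
        using Y'U' u less.prems unfolding U'_def by (intro span_minimal) auto
      show "U \<subseteq> span (insert u Y')"
      proof
        fix v assume v: "v \<in> U"
        have "v - (lie_prod u v / lie_prod u u) *\<^sub>R u \<in> U'"
          unfolding U'_def using v u less.prems
          by (auto simp: lie_prod_simps subspace_diff subspace_scale)
        then show "v \<in> span (insert u Y')"
          using span_breakdown_eq Y'(2) by blast
      qed
    qed
    moreover have "lie_orthogonal (insert u Y')"
    proof -
      have "lie_prod u y = 0" "lie_prod y u = 0" if "y \<in> Y'" for y
        using that Y'U' lie_prod_commute[of y u] unfolding U'_def by auto
      then show ?thesis
        using Y'(3) unfolding lie_orthogonal_def by auto
    qed
    ultimately show ?thesis by blast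
  qed
qed

lemma lie_prod_orthogonal_sum:
  assumes "finite Y" "lie_orthogonal Y"
  shows "lie_prod (\<Sum>y\<in>Y. f y *\<^sub>R y) (\<Sum>y\<in>Y. g y *\<^sub>R y) = (\<Sum>y\<in>Y. f y * g y * lie_prod y y)"
proof -
  have "lie_prod (\<Sum>y\<in>Y. f y *\<^sub>R y) (\<Sum>y\<in>Y. g y *\<^sub>R y)
      = (\<Sum>(y, z)\<in>Y \<times> Y. f y * g z * lie_prod y z)"
    by (simp add: bilinear_sum[OF bilinear_lie_prod] lie_prod_scaleR_left
        lie_prod_scaleR_right mult_ac case_prod_unfold)
  also have "\<dots> = (\<Sum>y\<in>Y. \<Sum>z\<in>Y. f y * g z * lie_prod y z)"
    by (simp add: sum.cartesian_product)
  also have "\<dots> = (\<Sum>y\<in>Y. \<Sum>z\<in>Y. if z = y then f y * g y * lie_prod y y else 0)"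
    using assms(2) by (intro sum.cong refl) (auto simp: lie_orthogonal_def)
  also have "\<dots> = (\<Sum>y\<in>Y. f y * g y * lie_prod y y)"
    using assms(1) by simp
  finally show ?thesis .
qed

lemma timelike_subspace_dim_le_2:
  fixes U :: "'n::finite lievec set"
  assumes U: "subspace U" and timelike: "\<And>u. u \<in> U \<Longrightarrow> u \<noteq> 0 \<Longrightarrow> lie_prod u u < 0"
  shows "dim U \<le> 2"
proof -
  \<comment> \<open>the form is positive semidefinite on the kernel of f, which has codimension 2\<close>
  define f :: "'n lievec \<Rightarrow> real \<times> real"
    where "f w = (fst w - fst (snd (snd w)), snd (snd (snd w)))" for w
  have lin: "linear f"
    by (rule linearI) (auto simp: f_def algebra_simps)
  have "u = 0" if "u \<in> U" "f u = 0" for u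
  proof (rule ccontr)
    assume "u \<noteq> 0"
    then have "lie_prod u u < 0" using timelike that(1) by blast
    moreover have "lie_prod u u = 2 * (fst u * fst u) + fst (snd u) \<bullet> fst (snd u)"
      using that(2) by (simp add: f_def lie_prod_components zero_prod_def)
    ultimately show False by (smt (verit) inner_ge_zero zero_le_square)
  qed
  then have "inj_on f (span U)"
    using lin U by (simp add: linear_inj_on_iff_eq_0 span_eq_iff[THEN iffD2, OF U])
  then have "dim (f ` U) = dim U"
    by (rule dim_image_eq[OF lin])
  moreover have "dim (f ` U) \<le> 2"
    using dim_subset_UNIV[of "f ` U"] by simp
  ultimately show ?thesis by simp
qed

lemma card_timelike_lie_orthogonal_le_2:
  assumes N: "independent N" "lie_orthogonal N" and timelike: "\<And>y. y \<in> N \<Longrightarrow> lie_prod y y < 0"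
  shows "card N \<le> 2"
proof -
  have fin: "finite N" using N(1) finiteI_independent by blast
  have "lie_prod u u < 0" if uN: "u \<in> span N" and u0: "u \<noteq> 0" for u
  proof -
    obtain c where u: "u = (\<Sum>y\<in>N. c y *\<^sub>R y)"
      using uN unfolding span_finite[OF fin] by blast
    then obtain y0 where y0: "y0 \<in> N" "c y0 \<noteq> 0"
      using u0 by (metis (no_types, lifting) scale_eq_0_iff sum.neutral)
    have term_nonpos: "c y * c y * lie_prod y y \<le> 0" if "y \<in> N" for y
      using timelike[OF that] by (simp add: mult_nonneg_nonpos)
    have "lie_prod u u = c y0 * c y0 * lie_prod y0 y0 + (\<Sum>y\<in>N - {y0}. c y * c y * lie_prod y y)"
      unfolding u lie_prod_orthogonal_sum[OF fin N(2)] using fin y0(1) by (simp add: sum.remove)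
    moreover have "c y0 * c y0 * lie_prod y0 y0 < 0"
      using y0(2) timelike[OF y0(1)] not_real_square_gt_zero mult_pos_neg by blast
    moreover have "(\<Sum>y\<in>N - {y0}. c y * c y * lie_prod y y) \<le> 0"
      using term_nonpos by (intro sum_nonpos) auto
    ultimately show ?thesis by linarith
  qed
  then have "dim (span N) \<le> 2"
    by (intro timelike_subspace_dim_le_2) (simp_all add: subspace_span)
  then show ?thesis
    using N(1) by (simp add: dim_span dim_eq_card_independent)
qed

lemma gram_det_eq_det:
  "gram_det Xs = det (mat (length Xs) (length Xs) (\<lambda>(i, j). lie_prod (Xs ! i) (Xs ! j)))"
  unfolding gram_det_def Determinant.det_def
  by (auto simp: lessThan_atLeast0 intro!: sum.cong prod.cong dest: permutes_in_image)

lemma sum_distinct_set_conv_nth: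
  "distinct ys \<Longrightarrow> (\<Sum>y\<in>set ys. f y) = (\<Sum>j<length ys. f (ys ! j))"
  using sum.reindex_bij_betw[OF bij_betw_nth[of ys "{..<length ys}" "set ys"], of f] by simp

lemma prod_distinct_set_conv_nth:
  "distinct ys \<Longrightarrow> (\<Prod>y\<in>set ys. f y) = (\<Prod>j<length ys. f (ys ! j))"
  using prod.reindex_bij_betw[OF bij_betw_nth[of ys "{..<length ys}" "set ys"], of f] by simp

lemma det_diagonal:
  "det (mat m m (\<lambda>(i, j). if i = j then d i else 0)) = (\<Prod>j<m. d j)"
  by (subst det_upper_triangular[of _ m])
    (auto simp: upper_triangular_def prod_list_diag_prod lessThan_atLeast0)

lemma det_congruent_diagonal:
  fixes C :: "nat \<Rightarrow> nat \<Rightarrow> 'a::comm_ring_1"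
  shows "det (mat m m (\<lambda>(i, i'). \<Sum>j<m. C i j * d j * C i' j))
    = (det (mat m m (\<lambda>(i, j). C i j)))\<^sup>2 * (\<Prod>j<m. d j)"
proof -
  define A where "A = mat m m (\<lambda>(i, j). C i j)"
  define D where "D = mat m m (\<lambda>(i, j). if i = j then d i else 0)"
  have A: "A \<in> carrier_mat m m" and D: "D \<in> carrier_mat m m"
    by (simp_all add: A_def D_def)
  have "mat m m (\<lambda>(i, i'). \<Sum>j<m. C i j * d j * C i' j) = A * D * transpose_mat A"
  proof (rule eq_matI)
    fix i i' assume "i < dim_row (A * D * transpose_mat A)" "i' < dim_col (A * D * transpose_mat A)"
    then have ii': "i < m" "i' < m" by (simp_all add: A_def)
    have AD: "(A * D) $$ (i, j) = C i j * d j" if "j < m" for j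
      using ii' that by (simp add: A_def D_def scalar_prod_def if_distrib cong: if_cong)
    have "(A * D * transpose_mat A) $$ (i, i') = (\<Sum>j\<in>{0..<m}. (A * D) $$ (i, j) * A $$ (i', j))"
      using ii' A D by (subst index_mult_mat(1)) (simp_all add: scalar_prod_def)
    also have "\<dots> = (\<Sum>j<m. C i j * d j * C i' j)"
      using ii' AD by (simp add: A_def lessThan_atLeast0)
    finally show "mat m m (\<lambda>(i, i'). \<Sum>j<m. C i j * d j * C i' j) $$ (i, i')
        = (A * D * transpose_mat A) $$ (i, i')"
      using ii' by simp
  qed (simp_all add: A_def)
  also have "det \<dots> = det A * det D * det A"
    using det_mult[OF mult_carrier_mat[OF A D] transpose_carrier_mat[THEN iffD2, OF A]]
      det_mult[OF A D] det_transpose[OF A] by simp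
  finally show ?thesis
    by (simp add: D_def det_diagonal A_def[symmetric] power2_eq_square mult_ac)
qed

lemma gram_det_orthogonal_factor:
  fixes L ys :: "'n::finite lievec list"
  assumes ys: "distinct ys" "lie_orthogonal (set ys)"
    and L: "set L \<subseteq> span (set ys)" "length L = length ys"
  shows "\<exists>a. gram_det L = a\<^sup>2 * (\<Prod>y\<in>set ys. lie_prod y y)"
proof -
  define m where "m = length ys"
  define d where "d j = lie_prod (ys ! j) (ys ! j)" for j
  have coords: "\<exists>c. L ! i = (\<Sum>y\<in>set ys. c y *\<^sub>R y)" if "i < m" for i
  proof -
    have "L ! i \<in> span (set ys)"
      using L nth_mem[of i L] that unfolding m_def by auto
    then show ?thesis
      unfolding span_finite[OF finite_set] by (auto simp: image_iff)
  qed
  define c where "c i = (SOME c. L ! i = (\<Sum>y\<in>set ys. c y *\<^sub>R y))" for i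
  have c: "L ! i = (\<Sum>y\<in>set ys. c i y *\<^sub>R y)" if "i < m" for i
    unfolding c_def by (rule someI_ex[OF coords[OF that]])
  have gram: "lie_prod (L ! i) (L ! i') = (\<Sum>j<m. c i (ys ! j) * d j * c i' (ys ! j))"
    if "i < m" "i' < m" for i i'
  proof -
    have "lie_prod (L ! i) (L ! i') = (\<Sum>y\<in>set ys. c i y * c i' y * lie_prod y y)"
      using that by (simp add: c lie_prod_orthogonal_sum ys(2))
    also have "\<dots> = (\<Sum>j<m. c i (ys ! j) * d j * c i' (ys ! j))"
      using ys(1) by (simp add: sum_distinct_set_conv_nth m_def d_def mult_ac)
    finally show ?thesis .
  qed
  have "gram_det L = det (mat m m (\<lambda>(i, i'). \<Sum>j<m. c i (ys ! j) * d j * c i' (ys ! j)))"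
    unfolding gram_det_eq_det L(2) m_def[symmetric] using gram by (intro arg_cong[where f = det] eq_matI) auto
  also have "\<dots> = (det (mat m m (\<lambda>(i, j). c i (ys ! j))))\<^sup>2 * (\<Prod>y\<in>set ys. lie_prod y y)"
    using ys(1) by (simp add: det_congruent_diagonal prod_distinct_set_conv_nth d_def m_def)
  finally show ?thesis by blast
qed

definition lorentzian_basis :: "'n::finite lievec set \<Rightarrow> 'n lievec \<Rightarrow> bool" where
  "lorentzian_basis Y y0 \<longleftrightarrow> finite Y \<and> lie_orthogonal Y \<and> y0 \<in> Y \<and> lie_prod y0 y0 < 0
     \<and> (\<forall>y\<in>Y - {y0}. lie_prod y y > 0)"

lemma lorentzian_basis_if_prod_neg:
  assumes Y: "independent Y" "lie_orthogonal Y" and neg: "(\<Prod>y\<in>Y. lie_prod y y) < 0"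
  obtains y0 where "lorentzian_basis Y y0"
proof -
  have fin: "finite Y" using Y(1) finiteI_independent by blast
  define N where "N = {y\<in>Y. lie_prod y y < 0}"
  have NY: "N \<subseteq> Y" by (simp add: N_def)
  then have "card N \<le> 2"
    using Y independent_mono[OF Y(1)]
    by (intro card_timelike_lie_orthogonal_le_2) (auto simp: N_def lie_orthogonal_def)
  have nonnull: "lie_prod y y \<noteq> 0" if "y \<in> Y" for y
  proof
    assume "lie_prod y y = 0"
    then have "(\<Prod>y\<in>Y. lie_prod y y) = 0" using fin that by (intro prod_zero) auto
    then show False using neg by simp
  qed
  have pos: "lie_prod y y > 0" if "y \<in> Y - N" for y
    using nonnull[of y] that unfolding N_def by auto
  have "(\<Prod>y\<in>N. lie_prod y y) * (\<Prod>y\<in>Y - N. lie_prod y y) < 0"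
    using neg prod.subset_diff[OF NY fin, of "\<lambda>y. lie_prod y y"] by (simp add: mult.commute)
  moreover have "(\<Prod>y\<in>Y - N. lie_prod y y) > 0"
    using pos by (rule prod_pos)
  ultimately have negN: "(\<Prod>y\<in>N. lie_prod y y) < 0"
    by (simp add: mult_less_0_iff)
  have "card N \<noteq> 0"
    using negN finite_subset[OF NY fin] by auto
  moreover have "card N \<noteq> 2"
  proof
    assume "card N = 2"
    then obtain b c where bc: "N = {b, c}" "b \<noteq> c" by (meson card_2_iff)
    then have "lie_prod b b < 0" "lie_prod c c < 0" by (auto simp: N_def)
    then have "(\<Prod>y\<in>N. lie_prod y y) > 0" using bc by (simp add: mult_neg_neg)
    then show False using negN by simp
  qed
  ultimately have "card N = 1" using \<open>card N \<le> 2\<close> by linarith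
  then obtain y0 where y0: "N = {y0}" by (rule card_1_singletonE)
  then have "y0 \<in> Y" "lie_prod y0 y0 < 0" by (auto simp: N_def)
  moreover have "\<forall>y\<in>Y - {y0}. lie_prod y y > 0" using pos y0 by simp
  ultimately show ?thesis
    using fin Y(2) that unfolding lorentzian_basis_def by blast
qed

lemma lorentzian_basis_exists:
  fixes L :: "'n::finite lievec list"
  assumes L: "distinct L" "independent (set L)" "gram_det L < 0"
  obtains Y y0 where "lorentzian_basis Y y0" "span Y = span (set L)"
proof -
  obtain Y where Y: "independent Y" "span Y = span (set L)" "lie_orthogonal Y"
    using lie_orthogonal_basis_exists[OF subspace_span] by blast
  obtain ys where ys: "set ys = Y" "distinct ys"
    using finite_distinct_list[OF finiteI_independent[OF Y(1)]] by blast
  have "length ys = dim (span Y)"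
    using Y(1) distinct_card[OF ys(2)] by (simp add: ys(1) dim_span dim_eq_card_independent)
  also have "\<dots> = length L"
    using L(1,2) Y(2) by (simp add: dim_span dim_eq_card_independent distinct_card)
  finally have "length L = length ys" ..
  moreover have "set L \<subseteq> span (set ys)"
    using ys(1) Y(2) span_superset by blast
  ultimately obtain a where "gram_det L = a\<^sup>2 * (\<Prod>y\<in>Y. lie_prod y y)"
    using gram_det_orthogonal_factor[OF ys(2)] Y(3) ys(1) by blast
  then have "(\<Prod>y\<in>Y. lie_prod y y) < 0"
    using L(3) zero_le_power2[of a] by (simp add: mult_less_0_iff)
  then obtain y0 where "lorentzian_basis Y y0"
    using lorentzian_basis_if_prod_neg Y(1,3) by blast
  then show ?thesis using Y(2) that by blast
qed

lemma lorentzian_basis_nonpositive_vanishing: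
  assumes B: "lorentzian_basis Y y0" and "c y0 = 0"
    and "lie_prod (\<Sum>y\<in>Y. c y *\<^sub>R y) (\<Sum>y\<in>Y. c y *\<^sub>R y) \<le> 0"
  shows "(\<Sum>y\<in>Y. c y *\<^sub>R y) = 0"
proof -
  have fin: "finite Y" and orth: "lie_orthogonal Y"
    using B by (simp_all add: lorentzian_basis_def)
  have nonneg: "0 \<le> c y * c y * lie_prod y y" if "y \<in> Y" for y
  proof (cases "y = y0")
    case False
    then have "lie_prod y y > 0" using B that by (simp add: lorentzian_basis_def)
    then show ?thesis by simp
  qed (simp add: \<open>c y0 = 0\<close>)
  have "(\<Sum>y\<in>Y. c y * c y * lie_prod y y) \<le> 0"
    using assms(3) by (simp add: lie_prod_orthogonal_sum[OF fin orth])
  then have "(\<Sum>y\<in>Y. c y * c y * lie_prod y y) = 0"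
    using nonneg by (simp add: antisym sum_nonneg)
  then have vanish: "\<forall>y\<in>Y. c y * c y * lie_prod y y = 0"
    using nonneg by (simp add: sum_nonneg_eq_0_iff[OF fin])
  have "c y = 0" if "y \<in> Y" for y
  proof (cases "y = y0")
    case False
    then have "lie_prod y y > 0" using B that by (simp add: lorentzian_basis_def)
    then show ?thesis using vanish that by fastforce
  qed (simp add: \<open>c y0 = 0\<close>)
  then show ?thesis by simp
qed

lemma lorentzian_basis_orthogonal_nonspacelike:
  assumes B: "lorentzian_basis Y y0" and X: "X \<in> span Y" and Z: "Z \<in> span Y" "Z \<noteq> 0"
    and XZ: "lie_prod X Z = 0" and XX: "lie_prod X X \<le> 0" and ZZ: "lie_prod Z Z \<le> 0"
  shows "X \<in> span {Z}"
proof -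
  have fin: "finite Y" using B by (simp add: lorentzian_basis_def)
  obtain a where a: "X = (\<Sum>y\<in>Y. a y *\<^sub>R y)"
    using X unfolding span_finite[OF fin] by blast
  obtain b where b: "Z = (\<Sum>y\<in>Y. b y *\<^sub>R y)"
    using Z(1) unfolding span_finite[OF fin] by blast
  have "b y0 \<noteq> 0"
  proof
    assume "b y0 = 0"
    then have "Z = 0"
      using lorentzian_basis_nonpositive_vanishing[OF B, of b] ZZ unfolding b by blast
    then show False using Z(2) by simp
  qed
  \<comment> \<open>eliminate the timelike coordinate\<close>
  define W where "W = b y0 *\<^sub>R X - a y0 *\<^sub>R Z"
  have W: "W = (\<Sum>y\<in>Y. (b y0 * a y - a y0 * b y) *\<^sub>R y)"
    unfolding W_def a b by (simp add: scaleR_sum_right scaleR_diff_left sum_subtractf)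
  have "lie_prod W W = b y0 * b y0 * lie_prod X X + a y0 * a y0 * lie_prod Z Z"
    using XZ lie_prod_commute[of Z X] unfolding W_def by (simp add: lie_prod_simps algebra_simps)
  also have "\<dots> \<le> 0"
    using XX ZZ by (intro add_nonpos_nonpos mult_nonneg_nonpos) simp_all
  finally have "W = 0"
    using lorentzian_basis_nonpositive_vanishing[OF B, of "\<lambda>y. b y0 * a y - a y0 * b y"]
    unfolding W by simp
  then have "inverse (b y0) *\<^sub>R (b y0 *\<^sub>R X) = inverse (b y0) *\<^sub>R (a y0 *\<^sub>R Z)"
    unfolding W_def by simp
  then have "X = inverse (b y0) *\<^sub>R (a y0 *\<^sub>R Z)"
    using \<open>b y0 \<noteq> 0\<close> by simp
  then show ?thesis by (simp add: span_base span_scale)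
qed

lemma lie_perp_spacelike:
  fixes L :: "'n::finite lievec list"
  assumes L: "distinct L" "independent (set L)" "gram_det L < 0"
    and S: "S \<in> span (set L)" "S \<noteq> 0" "lie_prod S S \<le> 0"
    and X: "X \<in> span (set L)" "lie_prod S X = 0" "X \<notin> span {S}"
  shows "lie_prod X X > 0"
proof (rule ccontr)
  assume "\<not> lie_prod X X > 0"
  obtain Y y0 where "lorentzian_basis Y y0" "span Y = span (set L)"
    using lorentzian_basis_exists[OF L] by blast
  then have "X \<in> span {S}"
    using S X \<open>\<not> lie_prod X X > 0\<close> lie_prod_commute[of S X]
    by (intro lorentzian_basis_orthogonal_nonspacelike[of Y y0]) auto
  with X(3) show False by contradiction
qed

lemma span_pair_iff: "P \<in> span {X, S} \<longleftrightarrow> (\<exists>a b. P = a *\<^sub>R X + b *\<^sub>R S)"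
proof
  assume "P \<in> span {X, S}"
  then obtain a where "P - a *\<^sub>R X \<in> span {S}" using span_breakdown_eq by blast
  then obtain b where "P - a *\<^sub>R X = b *\<^sub>R S" by (auto simp: span_singleton)
  then have "P = a *\<^sub>R X + b *\<^sub>R S" by (simp add: diff_eq_eq add.commute)
  then show "\<exists>a b. P = a *\<^sub>R X + b *\<^sub>R S" by blast
next
  assume "\<exists>a b. P = a *\<^sub>R X + b *\<^sub>R S"
  then obtain a b where "P = a *\<^sub>R X + b *\<^sub>R S" by blast
  then show "P \<in> span {X, S}" by (simp add: span_add span_scale span_base)
qed

lemma cycle_scaleR: "c \<noteq> 0 \<Longrightarrow> cycle (c *\<^sub>R X) = cycle X"
proof -
  assume "c \<noteq> 0"
  then have "X \<in> span {c *\<^sub>R X}"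
    using span_scale[of "c *\<^sub>R X" "{c *\<^sub>R X}" "inverse c"] by (simp add: span_base)
  then have "span {c *\<^sub>R X} = span {X, c *\<^sub>R X}"
    by (simp add: span_redundant)
  also have "\<dots> = span {c *\<^sub>R X, X}"
    by (simp add: insert_commute)
  also have "\<dots> = span {X}"
    by (simp add: span_redundant span_base span_scale)
  finally show ?thesis by (simp add: cycle_def)
qed

lemma cycle_eq_if_in_span: "X \<noteq> 0 \<Longrightarrow> X \<in> span {S} \<Longrightarrow> cycle X = cycle S"
  by (auto simp: span_singleton cycle_scaleR)

lemma in_span_if_cycle_eq: "cycle X = cycle S \<Longrightarrow> X \<in> span {S}"
  unfolding cycle_def by (metis insertI1 span_base)

lemma projections_diff_scaleR: "projections (X - c *\<^sub>R S) S = projections X S"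
proof -
  have "P \<in> span {X - c *\<^sub>R S, S} \<longleftrightarrow> P \<in> span {X, S}" for P
  proof
    assume "P \<in> span {X - c *\<^sub>R S, S}"
    then obtain a b where "P = a *\<^sub>R (X - c *\<^sub>R S) + b *\<^sub>R S" by (auto simp: span_pair_iff)
    then have "P = a *\<^sub>R X + (b - a * c) *\<^sub>R S" by (simp add: algebra_simps)
    then show "P \<in> span {X, S}" by (auto simp: span_pair_iff)
  next
    assume "P \<in> span {X, S}"
    then obtain a b where "P = a *\<^sub>R X + b *\<^sub>R S" by (auto simp: span_pair_iff)
    then have "P = a *\<^sub>R (X - c *\<^sub>R S) + (b + a * c) *\<^sub>R S" by (simp add: algebra_simps)
    then show "P \<in> span {X - c *\<^sub>R S, S}" by (auto simp: span_pair_iff)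
  qed
  then have "span {X - c *\<^sub>R S, S} = span {X, S}" by blast
  then show ?thesis by (simp add: projections_def)
qed

lemma card_projections_timelike:
  assumes SS: "lie_prod S S < 0" and SX: "lie_prod S X = 0" and XX: "lie_prod X X > 0"
  shows "card (projections X S) = 2"
proof -
  define p where "p = lie_prod X X"
  define q where "q = - lie_prod S S"
  define r where "r = sqrt (p / q)"
  have p: "p > 0" and q: "q > 0" using XX SS by (simp_all add: p_def q_def)
  then have r: "r > 0" and rr: "r * r * q = p" by (simp_all add: r_def)
  have XS: "lie_prod X S = 0" using SX by (simp add: lie_prod_commute)
  define N where "N \<sigma> = X + (\<sigma> * r) *\<^sub>R S" for \<sigma> :: real
  \<comment> \<open>the two null lines of the plane spanned by X and S\<close>
  have null: "lie_prod (N \<sigma>) (N \<sigma>) = p - \<sigma> * \<sigma> * (r * r * q)" for \<sigma>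
    by (simp add: N_def lie_prod_simps SX XS p_def q_def algebra_simps)
  have XN: "lie_prod X (N \<sigma>) = p" and SN: "lie_prod S (N \<sigma>) = - (\<sigma> * r * q)" for \<sigma>
    by (simp_all add: N_def lie_prod_simps SX XS q_def p_def)
  have "projections X S = {cycle (N 1), cycle (N (- 1))}"
  proof (intro equalityI subsetI)
    fix Q assume "Q \<in> projections X S"
    then obtain P where P: "Q = cycle P" "P \<noteq> 0" "P \<in> span {X, S}" "lie_prod P P = 0"
      unfolding projections_def by blast
    then obtain a b where ab: "P = a *\<^sub>R X + b *\<^sub>R S" by (auto simp: span_pair_iff)
    have "lie_prod P P = a * a * p - b * b * q"
      unfolding ab by (simp add: lie_prod_simps SX XS p_def q_def algebra_simps)
    then have "(a * r) * (a * r) * q = b * b * q"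
      using P(4) rr by (simp add: algebra_simps)
    then have "b = 1 * (a * r) \<or> b = - 1 * (a * r)"
      using q by (auto simp: square_eq_iff)
    then obtain \<sigma> where "\<sigma> \<in> {1, - 1}" "b = \<sigma> * (a * r)"
      by blast
    then have \<sigma>: "\<sigma> \<in> {1, - 1}" "P = a *\<^sub>R N \<sigma>"
      unfolding ab N_def by (simp_all add: algebra_simps)
    then have "a \<noteq> 0" using P(2) by auto
    then show "Q \<in> {cycle (N 1), cycle (N (- 1))}"
      using P(1) \<sigma> by (auto simp: cycle_scaleR)
  next
    fix Q assume "Q \<in> {cycle (N 1), cycle (N (- 1))}"
    then have "\<exists>\<sigma>. \<sigma> * \<sigma> = 1 \<and> Q = cycle (N \<sigma>)"
      by (elim insertE emptyE) (rule exI[of _ 1], simp, rule exI[of _ "- 1"], simp)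
    then obtain \<sigma> where \<sigma>: "\<sigma> * \<sigma> = 1" "Q = cycle (N \<sigma>)" by blast
    have "N \<sigma> \<in> span {X, S}"
      unfolding N_def span_pair_iff by (intro exI[of _ 1] exI[of _ "\<sigma> * r"]) simp
    moreover have "N \<sigma> \<noteq> 0" using XN[of \<sigma>] p by auto
    moreover have "lie_prod (N \<sigma>) (N \<sigma>) = 0" using null[of \<sigma>] \<sigma>(1) rr by simp
    ultimately show "Q \<in> projections X S"
      unfolding projections_def \<sigma>(2) by blast
  qed
  moreover have "cycle (N 1) \<noteq> cycle (N (- 1))"
  proof
    assume "cycle (N 1) = cycle (N (- 1))"
    then have "N 1 \<in> span {N (- 1)}" by (rule in_span_if_cycle_eq)
    then obtain k where k: "N 1 = k *\<^sub>R N (- 1)"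
      unfolding span_singleton by blast
    then have "p = k * p" using XN by (metis lie_prod_scaleR_right)
    then have "k = 1" using p by simp
    then show False using k SN[of 1] SN[of "- 1"] r q by simp
  qed
  ultimately show ?thesis by simp
qed

lemma projections_lightlike:
  assumes SS: "lie_prod S S = 0" and SX: "lie_prod S X = 0" and XX: "lie_prod X X > 0"
  shows "projections X S \<subseteq> {cycle S}"
proof
  fix Q assume "Q \<in> projections X S"
  then obtain P where P: "Q = cycle P" "P \<noteq> 0" "P \<in> span {X, S}" "lie_prod P P = 0"
    unfolding projections_def by blast
  then obtain a b where ab: "P = a *\<^sub>R X + b *\<^sub>R S" by (auto simp: span_pair_iff)
  have "lie_prod P P = a * a * lie_prod X X"
    using SX by (simp add: ab lie_prod_simps SS lie_prod_commute[of X S])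
  then have "P = b *\<^sub>R S" using P(4) XX ab by simp
  then show "Q \<in> {cycle S}" using P(1,2) by (auto simp: cycle_scaleR)
qed

lemma direct_sum_lie_perp:
  assumes V: "subspace V" and W: "W \<in> V" "lie_prod S W \<noteq> 0"
  shows "direct_sum_eq V (V \<inter> lie_perp {S}) (span {W})"
  unfolding direct_sum_eq_def
proof
  show "V = {u + w |u w. u \<in> V \<inter> lie_perp {S} \<and> w \<in> span {W}}"
  proof (intro equalityI subsetI)
    fix v assume v: "v \<in> V"
    define c where "c = lie_prod S v / lie_prod S W"
    have "v - c *\<^sub>R W \<in> V \<inter> lie_perp {S}"
      using V v W by (simp add: subspace_diff subspace_scale lie_prod_simps c_def)
    moreover have "c *\<^sub>R W \<in> span {W}" by (simp add: span_base span_scale)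
    ultimately show "v \<in> {u + w |u w. u \<in> V \<inter> lie_perp {S} \<and> w \<in> span {W}}"
      by (intro CollectI exI[of _ "v - c *\<^sub>R W"] exI[of _ "c *\<^sub>R W"]) simp
  next
    fix v assume "v \<in> {u + w |u w. u \<in> V \<inter> lie_perp {S} \<and> w \<in> span {W}}"
    then obtain u w where "v = u + w" "u \<in> V" "w \<in> span {W}" by blast
    moreover have "span {W} \<subseteq> V" using V W(1) by (simp add: span_minimal)
    ultimately show "v \<in> V" using V by (auto simp: subspace_add)
  qed
  show "V \<inter> lie_perp {S} \<inter> span {W} = {0}"
    using V W by (auto simp: span_singleton lie_prod_simps subspace_0)
qed

lemma card_projections_hyperbolic:
  fixes L :: "'n::finite lievec list"
  assumes L: "distinct L" "independent (set L)" "gram_det L < 0"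
    and S: "S \<in> span (set L)" "lie_prod S S < 0"
    and X: "X \<in> span (set L)" "X \<notin> span {S}"
  shows "card (projections X S) = 2"
proof -
  define c where "c = lie_prod S X / lie_prod S S"
  have "X - c *\<^sub>R S \<in> span (set L)"
    using S(1) X(1) by (simp add: span_diff span_scale)
  moreover have "lie_prod S (X - c *\<^sub>R S) = 0"
    using S(2) by (simp add: c_def lie_prod_simps)
  moreover have "X - c *\<^sub>R S \<notin> span {S}"
  proof
    assume "X - c *\<^sub>R S \<in> span {S}"
    then have "(X - c *\<^sub>R S) + c *\<^sub>R S \<in> span {S}"
      by (intro span_add span_scale) (simp_all add: span_base)
    then show False using X(2) by simp
  qed
  moreover have "S \<noteq> 0" using S(2) by auto
  ultimately have "lie_prod (X - c *\<^sub>R S) (X - c *\<^sub>R S) > 0"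
    using lie_perp_spacelike[OF L S(1)] S(2) by simp
  then show ?thesis
    using card_projections_timelike[OF S(2) \<open>lie_prod S (X - c *\<^sub>R S) = 0\<close>]
    by (simp add: projections_diff_scaleR)
qed

lemma in_span_lie_perp_singleton:
  "lie_prod S S \<noteq> 0 \<Longrightarrow> X \<in> span {S} \<Longrightarrow> lie_prod S X = 0 \<Longrightarrow> X = 0"
  by (auto simp: span_singleton lie_prod_scaleR_right)

theorem mainTheorem6:
  fixes Xs :: "'n::finite lievec list" and S :: "'n lievec" and k :: nat
  assumes n2: "CARD('n) \<ge> 2"
    and lenk: "length Xs = k" and k2: "2 \<le> k" and kn: "k \<le> CARD('n)"
    and proper: "\<forall>X\<in>set Xs. X \<noteq> 0 \<and> lie_prod X X = 0"
    and SS: "lie_prod S S \<le> 0"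
    and indep: "distinct (Xs @ [S])" "independent (set (Xs @ [S]))"
    and hyp: "gram_det (Xs @ [S]) < 0"
  shows
   "(lie_prod S S < 0 \<longrightarrow>
       (\<forall>X. X \<noteq> 0 \<and> X \<in> span (set (Xs @ [S])) \<and> lie_prod X X \<noteq> 0 \<and> cycle X \<noteq> cycle S
            \<longrightarrow> card (projections X S) = 2)
     \<and> (\<forall>X. X \<noteq> 0 \<and> X \<in> span (set (Xs @ [S])) \<and> X \<in> lie_perp {S} \<longrightarrow> lie_prod X X > 0)
     \<and> direct_sum_eq (span (set (Xs @ [S]))) (span (set (Xs @ [S])) \<inter> lie_perp {S}) (span {S}))
  \<and> (lie_prod S S = 0 \<longrightarrow>
       (\<forall>X. X \<noteq> 0 \<and> X \<in> span (set (Xs @ [S])) \<and> X \<in> lie_perp {S} \<and> cycle X \<noteq> cycle S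
            \<longrightarrow> lie_prod X X > 0 \<and> projections X S \<subseteq> {cycle S})
     \<and> (\<forall>Y. Y \<noteq> 0 \<and> lie_prod Y Y = 0 \<and> Y \<in> span (set (Xs @ [S])) \<and> Y \<notin> lie_perp {S}
            \<longrightarrow> direct_sum_eq (span (set (Xs @ [S]))) (span (set (Xs @ [S])) \<inter> lie_perp {S}) (span {Y})))"
proof -
  define L where "L = Xs @ [S]"
  have L: "distinct L" "independent (set L)" "gram_det L < 0"
    using indep hyp unfolding L_def by simp_all
  have SL: "S \<in> span (set L)" by (simp add: L_def span_base)
  have "S \<noteq> 0" using L(2) dependent_zero[of "set L"] unfolding L_def by auto
  note spacelike = lie_perp_spacelike[OF L SL \<open>S \<noteq> 0\<close> SS]
  have notin: "X \<notin> span {S}" if "X \<noteq> 0" "cycle X \<noteq> cycle S" for X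
    using cycle_eq_if_in_span that by blast
  show ?thesis
    unfolding L_def[symmetric]
  proof (intro conjI impI allI)
    assume "lie_prod S S < 0"
    then show "card (projections X S) = 2"
      if "X \<noteq> 0 \<and> X \<in> span (set L) \<and> lie_prod X X \<noteq> 0 \<and> cycle X \<noteq> cycle S" for X
      using card_projections_hyperbolic[OF L SL] notin that by blast
    show "lie_prod X X > 0" if "X \<noteq> 0 \<and> X \<in> span (set L) \<and> X \<in> lie_perp {S}" for X
      using spacelike[of X] in_span_lie_perp_singleton[of S X] \<open>lie_prod S S < 0\<close> that by auto
    show "direct_sum_eq (span (set L)) (span (set L) \<inter> lie_perp {S}) (span {S})"
      using direct_sum_lie_perp[OF subspace_span SL] \<open>lie_prod S S < 0\<close> by simp
  next
    assume "lie_prod S S = 0"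
    show "lie_prod X X > 0" and "projections X S \<subseteq> {cycle S}"
      if "X \<noteq> 0 \<and> X \<in> span (set L) \<and> X \<in> lie_perp {S} \<and> cycle X \<noteq> cycle S" for X
      using spacelike[of X] notin[of X] projections_lightlike[of S X] \<open>lie_prod S S = 0\<close> that by auto
    show "direct_sum_eq (span (set L)) (span (set L) \<inter> lie_perp {S}) (span {Y})"
      if "Y \<noteq> 0 \<and> lie_prod Y Y = 0 \<and> Y \<in> span (set L) \<and> Y \<notin> lie_perp {S}" for Y
      using direct_sum_lie_perp[OF subspace_span[of "set L"], of Y S] that by simp
  qed
qed

end
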